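(* Let $\mathcal{A}$ be a deterministic learning algorithm and consider the passive unlearning mechanism $\bar{\mathcal{A}}(U,\mathcal{A}(R\cup U),T(R\cup U))=\mathcal{A}(R\cup U)+\nu$ with $\nu\sim\mathcal{N}(0,\sigma^2 I_d)$ drawn independently at each call, where $\sigma$ may depend on the available information $(U,R\cup U)$ or $(\emptyset,R)$. If $\sigma=\sigma(R)=\frac{\mathrm{RS}_{\mathcal{A}}(R)}{\varepsilon}\sqrt{2\log(1.25/\delta)}$, computed from the retained set $R$, then $(\mathcal{A},\bar{\mathcal{A}})$ satisfies $(\varepsilon,\delta)$-unlearning for every $\varepsilon,\delta\in(0,1)$.
   Context: Datasets are finite subsets of a domain $\mathcal{Z}$; $\mathcal{A}$ maps datasets to $\mathcal{W}\subseteq\mathbb{R}^d$ with Euclidean norm. $\mathrm{RS}_{\mathcal{A}}(R)=\max_{Z\subseteq\mathcal{Z},|Z|=1}\|\mathcal{A}(R\cup Z)-\mathcal{A}(R)\|$. Two random variables $X,Y$ are $(\varepsilon,\delta)$-indistinguishable if for all measurable $W$, $P(X\in W)\le e^\varepsilon P(Y\in W)+\delta$ and symmetrically. The pair $(\mathcal{A},\bar{\mathcal{A}})$ satisfies $(\varepsilon,\delta)$-unlearning if for every dataset $R$ of size $n$ and every forget set $U$ with $|U\cup R|\le n+1$, $\bar{\mathcal{A}}(U,\mathcal{A}(R\cup U),T(R\cup U))$ and $\bar{\mathcal{A}}(\emptyset,\mathcal{A}(R),T(R))$ are $(\varepsilon,\delta)$-indistinguishable; here $T(S)=S$ is full side information.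 *)

theory Defs
  imports "HOL-Probability.Probability"
begin

definition gauss_measure :: "'a::euclidean_space \<Rightarrow> real \<Rightarrow> 'a measure" where
  "gauss_measure c \<sigma> =
     (if \<sigma> = 0 then return borel c
      else density lborel (\<lambda>x. ennreal ((2 * pi * \<sigma>\<^sup>2) powr (- real DIM('a) / 2)
                                       * exp (- (norm (x - c))\<^sup>2 / (2 * \<sigma>\<^sup>2)))))"

definition RS :: "('z set \<Rightarrow> 'a::real_normed_vector) \<Rightarrow> 'z set \<Rightarrow> real" where
  "RS A R = (SUP z. norm (A (R \<union> {z}) - A R))"

definition indist :: "real \<Rightarrow> real \<Rightarrow> 'a measure \<Rightarrow> 'a measure \<Rightarrow> bool" where
  "indist \<epsilon> \<delta> M N \<longleftrightarrow>
     (\<forall>W \<in> sets M. measure M W \<le> exp \<epsilon> * measure N W + \<delta>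
                  \<and> measure N W \<le> exp \<epsilon> * measure M W + \<delta>)"

text \<open>(eps,delta)-unlearning with full side information T(S) = S.  The unlearning
  mechanism takes (forget set U, trained model, side information) and returns the
  output distribution.  R is the retained set, U the forget set (disjoint from R).\<close>
definition unlearning ::
  "('z set \<Rightarrow> 'a) \<Rightarrow> ('z set \<Rightarrow> 'a \<Rightarrow> 'z set \<Rightarrow> 'a measure) \<Rightarrow> real \<Rightarrow> real \<Rightarrow> nat \<Rightarrow> bool" where
  "unlearning A Abar \<epsilon> \<delta> n \<longleftrightarrow>
     (\<forall>R U. finite R \<and> card R = n \<and> finite U \<and> R \<inter> U = {} \<and> card (U \<union> R) \<le> n + 1 \<longrightarrow>
        indist \<epsilon> \<delta> (Abar U (A (R \<union> U)) (R \<union> U)) (Abar {} (A R) R))"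

end

theory Submission
  imports Defs
begin

(*
  Both calls of the mechanism add Gaussian noise of the same scale sigma, computed from the
  retained set R, and since the forget set has at most one element the two centres A(R u U)
  and A(R) are at distance at most RS(R).  For
  lambda > 0 and m = (1 + lambda) a - lambda b the Gaussian densities satisfy pointwise
    p_a <= e^eps p_b + K p_m,   K = exp(lambda (1 + lambda) |a - b|^2 / (2 sigma^2) - lambda eps) / (1 + lambda),
  because completing the square turns the cross term into the density centred at m.
  Integrating over W gives P_a(W) <= e^eps P_b(W) + K, and the choice lambda = c^2 / eps
  with c = sqrt(2 ln(1.25 / delta)) makes K <= delta.
*)

lemma one_le_exp_neg_plus_exp_mult_div:
  fixes l y :: real
  assumes "0 < l"
  shows "1 \<le> exp (- y) + exp (l * y) / (1 + l)"
proof (cases "y \<le> 0")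
  case True
  then show ?thesis
    using assms by (simp add: add_increasing2)
next
  case False
  have "(1 + l) * (1 - exp (- y)) \<le> 1 + l * y"
  proof (cases "y \<le> 1")
    case True
    have "1 - exp (- y) \<le> y"
      using exp_ge_add_one_self[of "- y"] by simp
    then have "(1 + l) * (1 - exp (- y)) \<le> (1 + l) * y"
      using assms by (intro mult_left_mono) auto
    then show ?thesis
      using True by (simp add: algebra_simps)
  next
    case False
    have "(1 + l) * (1 - exp (- y)) \<le> 1 + l"
      using assms by (simp add: mult_left_le)
    also have "\<dots> \<le> 1 + l * y"
      using False assms by simp
    finally show ?thesis .
  qed
  also have "\<dots> \<le> exp (l * y)"
    by (rule exp_ge_add_one_self)
  finally show ?thesis
    using assms by (simp add: field_simps)
qed

lemma norm_diff_square_completion: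
  fixes x a b :: "'a::real_inner"
  shows "(1 + l) * (norm (x - a))\<^sup>2 - l * (norm (x - b))\<^sup>2
       = (norm (x - ((1 + l) *\<^sub>R a - l *\<^sub>R b)))\<^sup>2 - l * (1 + l) * (norm (a - b))\<^sup>2"
  unfolding power2_norm_eq_inner
  by (simp add: inner_diff_left inner_diff_right inner_commute algebra_simps)

definition gauss_density :: "'a::euclidean_space \<Rightarrow> real \<Rightarrow> 'a \<Rightarrow> real" where
  "gauss_density c \<sigma> x =
     (2 * pi * \<sigma>\<^sup>2) powr (- real DIM('a) / 2) * exp (- (norm (x - c))\<^sup>2 / (2 * \<sigma>\<^sup>2))"

lemma gauss_density_nonneg: "0 \<le> gauss_density c \<sigma> x"
  unfolding gauss_density_def by simp

lemma borel_measurable_gauss_density [measurable]: "gauss_density c \<sigma> \<in> borel_measurable borel"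
  unfolding gauss_density_def by measurable

lemma gauss_density_eq_prod_normal_density:
  assumes "0 < \<sigma>"
  shows "gauss_density c \<sigma> x = (\<Prod>b\<in>Basis. normal_density (c \<bullet> b) \<sigma> (x \<bullet> b))"
proof -
  have pos: "0 < 2 * pi * \<sigma>\<^sup>2"
    using assms by simp
  have "(\<Prod>b\<in>(Basis::'a set). 1 / sqrt (2 * pi * \<sigma>\<^sup>2)) = ((2 * pi * \<sigma>\<^sup>2) powr (- 1 / 2)) ^ DIM('a)"
    using pos by (simp add: powr_minus_divide powr_half_sqrt)
  also have "\<dots> = ((2 * pi * \<sigma>\<^sup>2) powr (- 1 / 2)) powr real DIM('a)"
    using assms by (intro powr_realpow[symmetric]) simp
  also have "\<dots> = (2 * pi * \<sigma>\<^sup>2) powr (- real DIM('a) / 2)"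
    by (simp add: powr_powr)
  finally have normalisation:
    "(\<Prod>b\<in>(Basis::'a set). 1 / sqrt (2 * pi * \<sigma>\<^sup>2)) = (2 * pi * \<sigma>\<^sup>2) powr (- real DIM('a) / 2)" .
  have "(norm (x - c))\<^sup>2 = (\<Sum>b\<in>Basis. ((x - c) \<bullet> b) * ((x - c) \<bullet> b))"
    unfolding power2_norm_eq_inner by (rule euclidean_inner)
  then have "(\<Prod>b\<in>(Basis::'a set). exp (- (x \<bullet> b - c \<bullet> b)\<^sup>2 / (2 * \<sigma>\<^sup>2)))
      = exp (- (norm (x - c))\<^sup>2 / (2 * \<sigma>\<^sup>2))"
    by (simp add: exp_sum[symmetric] sum_divide_distrib[symmetric] sum_negf inner_diff_left power2_eq_square)
  with normalisation show ?thesis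
    unfolding gauss_density_def normal_density_def prod.distrib by simp
qed

lemma nn_integral_gauss_density:
  assumes "0 < \<sigma>"
  shows "(\<integral>\<^sup>+x. ennreal (gauss_density c \<sigma> x) \<partial>lborel) = 1"
proof -
  have "(\<integral>\<^sup>+x. ennreal (gauss_density c \<sigma> x) \<partial>lborel)
      = (\<integral>\<^sup>+x. (\<Prod>b\<in>Basis. (\<lambda>b y. ennreal (normal_density (c \<bullet> b) \<sigma> y)) b (x \<bullet> b)) \<partial>lborel)"
    using assms by (simp add: gauss_density_eq_prod_normal_density prod_ennreal normal_density_nonneg)
  also have "\<dots> = (\<Prod>b\<in>(Basis::'a set). \<integral>\<^sup>+y. ennreal (normal_density (c \<bullet> b) \<sigma> y) \<partial>lborel)"
    by (rule nn_integral_lborel_prod) auto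
  also have "\<dots> = 1"
    using assms by (simp add: nn_integral_eq_integral normal_density_nonneg)
  finally show ?thesis .
qed

lemma gauss_measure_eq_density:
  "\<sigma> \<noteq> 0 \<Longrightarrow> gauss_measure c \<sigma> = density lborel (\<lambda>x. ennreal (gauss_density c \<sigma> x))"
  by (simp add: gauss_measure_def gauss_density_def)

lemma sets_gauss_measure: "sets (gauss_measure c \<sigma>) = sets borel"
  by (simp add: gauss_measure_def)

lemma prob_space_gauss_measure:
  assumes "0 < \<sigma>"
  shows "prob_space (gauss_measure c \<sigma>)"
  using assms by (intro prob_spaceI) (simp add: gauss_measure_eq_density emeasure_density nn_integral_gauss_density)

lemma gauss_density_le_shifted_mixture:
  fixes a b x :: "'a::euclidean_space"
  assumes "0 < \<sigma>" "0 < l"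
  shows "gauss_density a \<sigma> x \<le> exp \<epsilon> * gauss_density b \<sigma> x
           + exp (l * (1 + l) * (norm (a - b))\<^sup>2 / (2 * \<sigma>\<^sup>2) - l * \<epsilon>) / (1 + l)
             * gauss_density ((1 + l) *\<^sub>R a - l *\<^sub>R b) \<sigma> x"
proof -
  define m where "m = (1 + l) *\<^sub>R a - l *\<^sub>R b"
  define N where "N = (2 * pi * \<sigma>\<^sup>2) powr (- real DIM('a) / 2)"
  define A where "A = (norm (x - a))\<^sup>2 / (2 * \<sigma>\<^sup>2)"
  define B where "B = (norm (x - b))\<^sup>2 / (2 * \<sigma>\<^sup>2)"
  define M where "M = (norm (x - m))\<^sup>2 / (2 * \<sigma>\<^sup>2)"
  define E where "E = l * (1 + l) * (norm (a - b))\<^sup>2 / (2 * \<sigma>\<^sup>2)"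
  define y where "y = B - A - \<epsilon>"
  have "- (1 + l) * A + l * B = - ((1 + l) * (norm (x - a))\<^sup>2 - l * (norm (x - b))\<^sup>2) / (2 * \<sigma>\<^sup>2)"
    unfolding A_def B_def using assms(1) by (simp add: field_simps)
  also have "\<dots> = E - M"
    unfolding norm_diff_square_completion E_def M_def m_def using assms(1) by (simp add: field_simps)
  finally have completed: "- (1 + l) * A + l * B = E - M" .
  have "exp (- A) \<le> exp (- A) * (exp (- y) + exp (l * y) / (1 + l))"
    using one_le_exp_neg_plus_exp_mult_div[OF assms(2), of y] by simp
  also have "\<dots> = exp (- A - y) + exp (- A + l * y) / (1 + l)"
    by (simp add: distrib_left mult_exp_exp)
  also have "- A - y = \<epsilon> + - B"
    by (simp add: y_def)
  also have "- A + l * y = (E - l * \<epsilon>) + - M"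
    unfolding y_def using completed by (simp add: algebra_simps)
  finally have "exp (- A) \<le> exp \<epsilon> * exp (- B) + exp (E - l * \<epsilon>) / (1 + l) * exp (- M)"
    by (simp only: exp_add times_divide_eq_left mult.commute[of "exp (- M)"])
  then have "N * exp (- A) \<le> N * (exp \<epsilon> * exp (- B) + exp (E - l * \<epsilon>) / (1 + l) * exp (- M))"
    by (rule mult_left_mono) (simp add: N_def)
  also have "\<dots> = exp \<epsilon> * (N * exp (- B)) + exp (E - l * \<epsilon>) / (1 + l) * (N * exp (- M))"
    by (simp add: algebra_simps)
  finally show ?thesis
    unfolding E_def[symmetric] m_def[symmetric]
    by (simp add: gauss_density_def N_def A_def B_def M_def)
qed

lemma measure_gauss_measure_le:
  fixes a b :: "'a::euclidean_space"
  assumes "0 < \<sigma>" "0 < l" and W: "W \<in> sets borel"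
  shows "measure (gauss_measure a \<sigma>) W \<le> exp \<epsilon> * measure (gauss_measure b \<sigma>) W
           + exp (l * (1 + l) * (norm (a - b))\<^sup>2 / (2 * \<sigma>\<^sup>2) - l * \<epsilon>) / (1 + l)"
proof -
  define K where "K = exp (l * (1 + l) * (norm (a - b))\<^sup>2 / (2 * \<sigma>\<^sup>2) - l * \<epsilon>) / (1 + l)"
  define m where "m = (1 + l) *\<^sub>R a - l *\<^sub>R b"
  have K_nonneg: "0 \<le> K"
    using assms(2) by (simp add: K_def)
  have finite: "finite_measure (gauss_measure c \<sigma>)" for c :: 'a
    using prob_space_gauss_measure[OF assms(1)] by (rule prob_space.finite_measure)
  have pointwise: "ennreal (gauss_density a \<sigma> x) * indicator W x
      \<le> ennreal (exp \<epsilon>) * (ennreal (gauss_density b \<sigma> x) * indicator W x)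
        + ennreal K * ennreal (gauss_density m \<sigma> x)" for x
  proof -
    have "ennreal (gauss_density a \<sigma> x) \<le> ennreal (exp \<epsilon> * gauss_density b \<sigma> x + K * gauss_density m \<sigma> x)"
      using gauss_density_le_shifted_mixture[OF assms(1,2), of a x \<epsilon> b]
      by (intro ennreal_leI) (simp add: K_def m_def)
    then show ?thesis
      using K_nonneg by (cases "x \<in> W") (simp_all add: ennreal_plus ennreal_mult gauss_density_nonneg)
  qed
  have "emeasure (gauss_measure a \<sigma>) W = (\<integral>\<^sup>+x. ennreal (gauss_density a \<sigma> x) * indicator W x \<partial>lborel)"
    using assms by (simp add: gauss_measure_eq_density emeasure_density)
  also have "\<dots> \<le> (\<integral>\<^sup>+x. ennreal (exp \<epsilon>) * (ennreal (gauss_density b \<sigma> x) * indicator W x)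
                          + ennreal K * ennreal (gauss_density m \<sigma> x) \<partial>lborel)"
    by (rule nn_integral_mono) (rule pointwise)
  also have "\<dots> = ennreal (exp \<epsilon>) * (\<integral>\<^sup>+x. ennreal (gauss_density b \<sigma> x) * indicator W x \<partial>lborel)
                  + ennreal K * (\<integral>\<^sup>+x. ennreal (gauss_density m \<sigma> x) \<partial>lborel)"
    using W by (simp add: nn_integral_add nn_integral_cmult)
  also have "\<dots> = ennreal (exp \<epsilon>) * emeasure (gauss_measure b \<sigma>) W + ennreal K"
    using assms by (simp add: gauss_measure_eq_density emeasure_density nn_integral_gauss_density)
  finally have "ennreal (measure (gauss_measure a \<sigma>) W)
      \<le> ennreal (exp \<epsilon> * measure (gauss_measure b \<sigma>) W + K)"
    using K_nonneg
    by (simp add: finite_measure.emeasure_eq_measure[OF finite] ennreal_plus ennreal_mult)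
  then show ?thesis
    using K_nonneg by (subst (asm) ennreal_le_iff) (auto simp: K_def)
qed

lemma exp_half_le: "exp (1 / 2 :: real) \<le> 7 / 4"
proof -
  have "exp (1 / 2 :: real) ^ 2 \<le> (7 / 4) ^ 2"
    using exp_le by (simp add: exp_double[symmetric] power2_eq_square mult_exp_exp)
  then show ?thesis
    by (rule power2_le_imp_le) simp
qed

lemma ln_five_quarters_ge: "1 / 5 \<le> ln (1.25 :: real)"
  using ln_le_minus_one[of "4 / 5 :: real"] ln_inverse[of "1.25 :: real"] by simp

lemma gauss_mechanism_slack_le:
  fixes \<epsilon> \<delta> s D :: real
  defines "c \<equiv> sqrt (2 * ln (1.25 / \<delta>))"
  assumes \<epsilon>: "0 < \<epsilon>" "\<epsilon> < 1" and \<delta>: "0 < \<delta>" "\<delta> < 1" and "0 < s" "0 \<le> D" "D \<le> s"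
  shows "exp (c\<^sup>2 / \<epsilon> * (1 + c\<^sup>2 / \<epsilon>) * D\<^sup>2 / (2 * (s / \<epsilon> * c)\<^sup>2) - c\<^sup>2 / \<epsilon> * \<epsilon>)
           / (1 + c\<^sup>2 / \<epsilon>) \<le> \<delta>"
proof -
  \<comment> \<open>With k = c^2 the slack is at most e^(eps/2) e^(-k/2) / (1 + k/eps); then
    e^(1/2) <= 7/4, e^(-k/2) = delta / 1.25 and k >= 2/5 make it at most delta.\<close>
  define k where "k = 2 * ln (1.25 / \<delta>)"
  have "ln 1.25 \<le> ln (1.25 / \<delta>)"
    using \<delta> by (subst ln_le_cancel_iff) (auto simp: field_simps)
  then have k_ge: "2 / 5 \<le> k"
    using ln_five_quarters_ge by (simp add: k_def)
  have c_square: "c\<^sup>2 = k"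
    using k_ge by (simp add: c_def k_def)
  have exp_half_k: "exp (k / 2) = 1.25 / \<delta>"
    using \<delta> by (simp add: k_def)
  have "D\<^sup>2 / s\<^sup>2 \<le> 1"
    using assms by (simp add: power_mono)
  then have "(\<epsilon> + k) / 2 * (D\<^sup>2 / s\<^sup>2) \<le> (\<epsilon> + k) / 2"
    using \<epsilon> k_ge by (intro mult_left_le) auto
  then have "exp ((\<epsilon> + k) / 2 * (D\<^sup>2 / s\<^sup>2) - k) \<le> exp ((\<epsilon> + k) / 2 - k)"
    by simp
  also have "\<dots> = exp (\<epsilon> / 2) / exp (k / 2)"
    by (simp add: exp_diff[symmetric] field_simps)
  also have "\<dots> \<le> 7 / 4 / exp (k / 2)"
  proof -
    have "exp (\<epsilon> / 2) \<le> exp (1 / 2)"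
      using \<epsilon> by simp
    then have "exp (\<epsilon> / 2) \<le> 7 / 4"
      using exp_half_le by linarith
    then show ?thesis
      by (rule divide_right_mono) simp
  qed
  also have "\<dots> = 7 / 5 * \<delta>"
    unfolding exp_half_k using \<delta> by simp
  finally have exp_le: "exp ((\<epsilon> + k) / 2 * (D\<^sup>2 / s\<^sup>2) - k) \<le> 7 / 5 * \<delta>" .
  have "7 / 5 \<le> 1 + k / \<epsilon>"
    using \<epsilon> k_ge by (simp add: field_simps)
  then have "exp ((\<epsilon> + k) / 2 * (D\<^sup>2 / s\<^sup>2) - k) / (1 + k / \<epsilon>) \<le> (7 / 5 * \<delta>) / (7 / 5)"
    using exp_le \<delta> by (intro frac_le) auto
  moreover have "c\<^sup>2 / \<epsilon> * (1 + c\<^sup>2 / \<epsilon>) * D\<^sup>2 / (2 * (s / \<epsilon> * c)\<^sup>2) - c\<^sup>2 / \<epsilon> * \<epsilon>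
      = (\<epsilon> + k) / 2 * (D\<^sup>2 / s\<^sup>2) - k"
    using assms k_ge unfolding power_mult_distrib c_square by (simp add: field_simps power2_eq_square)
  ultimately show ?thesis
    by (simp add: c_square)
qed

lemma indist_refl:
  assumes "0 \<le> \<epsilon>" "0 \<le> \<delta>"
  shows "indist \<epsilon> \<delta> M M"
proof -
  have "measure M W \<le> exp \<epsilon> * measure M W" for W
    using assms mult_right_mono[of 1 "exp \<epsilon>" "measure M W"] by simp
  then show ?thesis
    unfolding indist_def using assms by (auto intro: add_increasing2)
qed

theorem indist_gauss_measure:
  fixes a b :: "'a::euclidean_space"
  assumes \<epsilon>: "0 < \<epsilon>" "\<epsilon> < 1" and \<delta>: "0 < \<delta>" "\<delta> < 1" and dist: "norm (a - b) \<le> s"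
  shows "indist \<epsilon> \<delta> (gauss_measure a (s / \<epsilon> * sqrt (2 * ln (1.25 / \<delta>))))
                     (gauss_measure b (s / \<epsilon> * sqrt (2 * ln (1.25 / \<delta>))))"
proof (cases "s = 0")
  case True
  then show ?thesis
    using dist \<epsilon> \<delta> by (simp add: indist_refl)
next
  case False
  define c where "c = sqrt (2 * ln (1.25 / \<delta>))"
  define \<sigma> where "\<sigma> = s / \<epsilon> * c"
  have "0 < s"
    using False dist norm_ge_zero[of "a - b"] by linarith
  moreover have "0 < c"
    using \<delta> by (simp add: c_def)
  ultimately have \<sigma>_pos: "0 < \<sigma>" and l_pos: "0 < c\<^sup>2 / \<epsilon>"
    using \<epsilon> by (simp_all add: \<sigma>_def)
  have slack: "exp (c\<^sup>2 / \<epsilon> * (1 + c\<^sup>2 / \<epsilon>) * (norm (x - y))\<^sup>2 / (2 * \<sigma>\<^sup>2) - c\<^sup>2 / \<epsilon> * \<epsilon>)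
      / (1 + c\<^sup>2 / \<epsilon>) \<le> \<delta>" if "norm (x - y) \<le> s" for x y :: 'a
    unfolding c_def \<sigma>_def by (rule gauss_mechanism_slack_le[OF \<epsilon> \<delta> \<open>0 < s\<close> norm_ge_zero that])
  have one_sided: "measure (gauss_measure x \<sigma>) W \<le> exp \<epsilon> * measure (gauss_measure y \<sigma>) W + \<delta>"
    if "norm (x - y) \<le> s" "W \<in> sets borel" for x y :: 'a and W
    using measure_gauss_measure_le[OF \<sigma>_pos l_pos \<open>W \<in> sets borel\<close>, of x \<epsilon> y] slack[OF that(1)]
    by linarith
  have "norm (b - a) \<le> s"
    using dist by (simp add: norm_minus_commute)
  then show ?thesis
    using dist one_sided unfolding indist_def sets_gauss_measure c_def[symmetric] \<sigma>_def[symmetric]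
    by blast
qed

lemma norm_diff_le_RS:
  assumes "bdd_above (range (\<lambda>z. norm (A (R \<union> {z}) - A R)))"
  shows "norm (A (R \<union> {z}) - A R) \<le> RS A R"
  unfolding RS_def using assms by (rule cSUP_upper[OF UNIV_I])

lemma norm_diff_le_RS_of_card_le_one:
  assumes bdd: "bdd_above (range (\<lambda>z. norm (A (R \<union> {z}) - A R)))"
    and "finite U" "card U \<le> 1"
  shows "norm (A (R \<union> U) - A R) \<le> RS A R"
proof (cases "U = {}")
  case True
  then show ?thesis
    using order_trans[OF norm_ge_zero norm_diff_le_RS[OF bdd]] by simp
next
  case False
  then have "card U \<noteq> 0"
    using assms(2) by simp
  then have "card U = 1"
    using assms(3) by linarith
  then obtain u where "U = {u}"
    by (rule card_1_singletonE)
  then show ?thesis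
    using norm_diff_le_RS[OF bdd] by simp
qed

theorem mainTheorem3:
  fixes A :: "'z set \<Rightarrow> 'a::euclidean_space" and \<epsilon> \<delta> :: real and n :: nat
  assumes "0 < \<epsilon>" "\<epsilon> < 1" "0 < \<delta>" "\<delta> < 1"
    and "\<And>R. finite R \<Longrightarrow> bdd_above (range (\<lambda>z. norm (A (R \<union> {z}) - A R)))"
  shows "unlearning A
           (\<lambda>U w S. gauss_measure w (RS A (S - U) / \<epsilon> * sqrt (2 * ln (1.25 / \<delta>))))
           \<epsilon> \<delta> n"
  unfolding unlearning_def
proof (intro allI impI)
  fix R U :: "'z set"
  assume H: "finite R \<and> card R = n \<and> finite U \<and> R \<inter> U = {} \<and> card (U \<union> R) \<le> n + 1"
  then have "card (U \<union> R) = card U + card R"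
    by (intro card_Un_disjoint) auto
  then have "card U \<le> 1"
    using H by simp
  then have "norm (A (R \<union> U) - A R) \<le> RS A R"
    using H by (intro norm_diff_le_RS_of_card_le_one assms(5)) auto
  moreover have "R \<union> U - U = R"
    using H by auto
  ultimately show "indist \<epsilon> \<delta> (gauss_measure (A (R \<union> U)) (RS A (R \<union> U - U) / \<epsilon> * sqrt (2 * ln (1.25 / \<delta>))))
                                (gauss_measure (A R) (RS A (R - {}) / \<epsilon> * sqrt (2 * ln (1.25 / \<delta>))))"
    using indist_gauss_measure[OF assms(1-4)] by simp
qed

end
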